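(* Let $T \ge 1$ be an integer and $p^* \in (0,1]$. For integers $l \ge 1$ and $0 \le n \le l-1$ with $l-n \le T$ put $$P^l(n)=\frac{\prod_{i=0}^{l-n-1}\left(1-\frac{i}{T}\right)}{T^{n}}.$$ Fix a sequence $L_1, L_2, L_3,\dots$ of pairwise distinct items (loopback 3-tuples). A device $D$ is modeled by a function $g_D$ from $\{L_1,L_2,\dots\}$ to $\{0,1,\dots,T-1\}$. For $i\ge 1$, the collision structure of $D$ after $i$ iterations is the partition of $\{L_1,\dots,L_i\}$ into the nonempty fibers of $g_D$ restricted to $\{L_1,\dots,L_i\}$; let $n_i(D)$ be $i$ minus the number of blocks of this partition (the number of independent collisions). The phase-2 procedure processes $L_1, L_2,\dots$ in this fixed order and stops at the least $i$ with $P^i(n_i(D)) \le p^*$; call this index $l(D)$ (assumed to exist). Its output, the device ID of $D$, is the pair $(C_D, l(D))$, where $C_D$ is the set of all pairs $(L_j, B)$ with $j \le l(D)$, $L_j$ not the first (lowest-index) element of its block in the collision structure after $l(D)$ iterations, and $B$ the first element of that block. Let $D$ and $D'$ be devices, and let $l=l(D)$. If the collision structure of $D'$ after $l$ iterations equals the collision structure of $D$ after $l$ iterations, then $D'$ and $D$ have identical device IDs, i.e. $l(D')=l$ and $C_{D'}=C_D$.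
   Context: This models the device-ID computation for the Double-Hash Port Selection algorithm: each loopback 3-tuple $L_i$ is hashed by a keyed hash into one of $T$ perturbation-table cells, and the attacker only observes which tuples share a cell. The order in which the tuples $L_i$ are tested is deterministic and the same for all devices. *)

theory Defs
  imports Complex_Main
begin

definition Pl :: "nat \<Rightarrow> nat \<Rightarrow> nat \<Rightarrow> real" where
  "Pl T l n = (\<Prod>i<l - n. 1 - real i / real T) / real T ^ n"

definition items :: "(nat \<Rightarrow> 'a) \<Rightarrow> nat \<Rightarrow> 'a set" where
  "items L i = L ` {1..i}"

definition coll_struct :: "(nat \<Rightarrow> 'a) \<Rightarrow> ('a \<Rightarrow> nat) \<Rightarrow> nat \<Rightarrow> 'a set set" where
  "coll_struct L g i = (\<lambda>y. {x \<in> items L i. g x = g y}) ` items L i"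

definition ncoll :: "(nat \<Rightarrow> 'a) \<Rightarrow> ('a \<Rightarrow> nat) \<Rightarrow> nat \<Rightarrow> nat" where
  "ncoll L g i = i - card (coll_struct L g i)"

definition stop_idx :: "nat \<Rightarrow> real \<Rightarrow> (nat \<Rightarrow> 'a) \<Rightarrow> ('a \<Rightarrow> nat) \<Rightarrow> nat" where
  "stop_idx T p L g = (LEAST i. 1 \<le> i \<and> Pl T i (ncoll L g i) \<le> p)"

definition first_elem :: "(nat \<Rightarrow> 'a) \<Rightarrow> 'a set \<Rightarrow> 'a" where
  "first_elem L B = L (LEAST k. 1 \<le> k \<and> L k \<in> B)"

definition coll_set :: "nat \<Rightarrow> real \<Rightarrow> (nat \<Rightarrow> 'a) \<Rightarrow> ('a \<Rightarrow> nat) \<Rightarrow> ('a \<times> 'a) set" where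
  "coll_set T p L g =
     (let l = stop_idx T p L g in
      {(L j, first_elem L B) | j B. 1 \<le> j \<and> j \<le> l \<and> B \<in> coll_struct L g l \<and>
                                  L j \<in> B \<and> L j \<noteq> first_elem L B})"

definition device_id :: "nat \<Rightarrow> real \<Rightarrow> (nat \<Rightarrow> 'a) \<Rightarrow> ('a \<Rightarrow> nat) \<Rightarrow> ('a \<times> 'a) set \<times> nat" where
  "device_id T p L g = (coll_set T p L g, stop_idx T p L g)"

end

theory Submission
  imports Defs
begin

text \<open>The stopping rule and the device ID only look at the collision structures after
  \<open>i \<le> l(D)\<close> iterations, and the collision structure after \<open>l\<close> iterations determines all
  earlier ones, since a partition of \<open>{L_1..L_l}\<close> into fibers is the same as the relation
  "same hash value", which restricts to \<open>{L_1..L_i}\<close>. So \<open>D'\<close> sees the same collision counts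
  up to \<open>l\<close>, stops at the same index and outputs the same set. Only the existence of
  \<open>l(D)\<close> is used.\<close>

lemma items_mono: "i \<le> l \<Longrightarrow> items L i \<subseteq> items L l"
  unfolding items_def by auto

lemma coll_struct_eq_iff:
  "coll_struct L g' l = coll_struct L g l \<longleftrightarrow>
     (\<forall>x \<in> items L l. \<forall>y \<in> items L l. g' x = g' y \<longleftrightarrow> g x = g y)"
proof
  assume eq: "coll_struct L g' l = coll_struct L g l"
  show "\<forall>x \<in> items L l. \<forall>y \<in> items L l. g' x = g' y \<longleftrightarrow> g x = g y"
  proof (intro ballI)
    fix x y assume x: "x \<in> items L l" and y: "y \<in> items L l"
    have "{z \<in> items L l. g' z = g' y} \<in> coll_struct L g l"
      using eq y unfolding coll_struct_def by blast
    then obtain w where "{z \<in> items L l. g' z = g' y} = {z \<in> items L l. g z = g w}"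
      unfolding coll_struct_def by blast
    moreover from this have "g y = g w" using y by blast
    ultimately show "g' x = g' y \<longleftrightarrow> g x = g y" using x by (auto simp: set_eq_iff)
  qed
next
  assume "\<forall>x \<in> items L l. \<forall>y \<in> items L l. g' x = g' y \<longleftrightarrow> g x = g y"
  then show "coll_struct L g' l = coll_struct L g l"
    unfolding coll_struct_def by (intro image_cong) auto
qed

lemma coll_struct_eq_le:
  assumes "coll_struct L g' l = coll_struct L g l" and "i \<le> l"
  shows "coll_struct L g' i = coll_struct L g i"
  using assms(1) items_mono[OF assms(2)] unfolding coll_struct_eq_iff by (meson subsetD)

lemma ncoll_eq_le:
  assumes "coll_struct L g' l = coll_struct L g l" and "i \<le> l"
  shows "ncoll L g' i = ncoll L g i"
  using coll_struct_eq_le[OF assms] unfolding ncoll_def by simp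

lemma stop_idx_cong:
  assumes "\<exists>i\<ge>1. Pl T i (ncoll L g i) \<le> p"
    and "\<And>i. i \<le> stop_idx T p L g \<Longrightarrow> ncoll L g' i = ncoll L g i"
  shows "stop_idx T p L g' = stop_idx T p L g"
proof -
  let ?l = "stop_idx T p L g"
  have stops: "1 \<le> ?l \<and> Pl T ?l (ncoll L g ?l) \<le> p"
    unfolding stop_idx_def using assms(1) by (rule LeastI_ex)
  have earlier: "\<not> (1 \<le> i \<and> Pl T i (ncoll L g i) \<le> p)" if "i < ?l" for i
    using that unfolding stop_idx_def by (rule not_less_Least)
  show ?thesis
    unfolding stop_idx_def[of T p L g']
  proof (rule Least_equality)
    show "1 \<le> ?l \<and> Pl T ?l (ncoll L g' ?l) \<le> p"
      using stops assms(2) by simp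
  next
    fix i assume "1 \<le> i \<and> Pl T i (ncoll L g' i) \<le> p"
    then show "?l \<le> i"
      using earlier[of i] assms(2)[of i] by fastforce
  qed
qed

lemma coll_set_cong:
  assumes "stop_idx T p L g' = stop_idx T p L g"
    and "coll_struct L g' (stop_idx T p L g) = coll_struct L g (stop_idx T p L g)"
  shows "coll_set T p L g' = coll_set T p L g"
  using assms unfolding coll_set_def by (simp add: Let_def)

theorem lemma1:
  fixes T :: nat and p :: real and L :: "nat \<Rightarrow> 'a" and g g' :: "'a \<Rightarrow> nat"
  assumes "T \<ge> 1" and "0 < p" and "p \<le> 1"
    and "inj_on L {1..}"
    and "\<forall>j\<ge>1. g (L j) < T" and "\<forall>j\<ge>1. g' (L j) < T"
    and "\<exists>i\<ge>1. Pl T i (ncoll L g i) \<le> p"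
    and "coll_struct L g' (stop_idx T p L g) = coll_struct L g (stop_idx T p L g)"
  shows "stop_idx T p L g' = stop_idx T p L g \<and> coll_set T p L g' = coll_set T p L g"
proof
  show same_stop: "stop_idx T p L g' = stop_idx T p L g"
    using assms(7) ncoll_eq_le[OF assms(8)] by (rule stop_idx_cong)
  show "coll_set T p L g' = coll_set T p L g"
    using same_stop assms(8) by (rule coll_set_cong)
qed

end
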